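(* For every $s\in(0,1)$ and $p>1$, the function $u_{s,p}(x):=(1-|x|^{m})^s_+$, $x\in\mathbb R$, with $m=\frac{p}{p-1}$, belongs to $W^{s,p}(\mathbb R)$, i.e. $u_{s,p}\in L^p(\mathbb R)$ and $\int_{\mathbb R}\int_{\mathbb R}\frac{|u_{s,p}(x)-u_{s,p}(y)|^p}{|x-y|^{1+sp}}dx\,dy<\infty$.
   Context: $(a)_+=\max\{a,0\}$. *)

theory Defs
  imports "HOL-Analysis.Analysis"
begin

definition pos_part :: "real \<Rightarrow> real" where
  "pos_part a = max a 0"

definition u_sp :: "real \<Rightarrow> real \<Rightarrow> real \<Rightarrow> real" where
  "u_sp s p x = (pos_part (1 - \<bar>x\<bar> powr (p / (p - 1)))) powr s"

definition in_Wsp :: "real \<Rightarrow> real \<Rightarrow> (real \<Rightarrow> real) \<Rightarrow> bool" where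
  "in_Wsp s p u \<longleftrightarrow>
     u \<in> borel_measurable lborel \<and>
     integrable lborel (\<lambda>x. \<bar>u x\<bar> powr p) \<and>
     (\<integral>\<^sup>+ x. (\<integral>\<^sup>+ y. ennreal (\<bar>u x - u y\<bar> powr p / \<bar>x - y\<bar> powr (1 + s * p)) \<partial>lborel) \<partial>lborel) < \<infinity>"

end

theory Submission
  imports Defs
begin

text \<open>
  Write m = p/(p-1) and, for |x| < 1 and |x| \<le> |y|, c = 1 - |x| and t = |x - y|.
  Since r \<mapsto> r^m is m-Lipschitz on [0,1] and r \<mapsto> r^s is concave with 1 - |x|^m \<ge> c,
  the difference |u(x) - u(y)| is at most m t c^(s-1); it is also at most (m t)^s by
  s-H\<ouml>lder continuity of r \<mapsto> r^s, and at most 1. Hence the Gagliardo integrand is dominated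
  by m^p c^(-e) t^(e-1) for t \<le> 1 and by t^(-1-sp) for t \<ge> 1, for any 0 < e \<le> p(1-s).
  Integrating in y leaves O(c^(-e)), which is integrable over x \<in> (-1,1) once e < 1.
\<close>

lemma powr_diff_le_mult_diff:
  fixes a b m :: real
  assumes "0 \<le> a" "a \<le> b" "b \<le> 1" "1 \<le> m"
  shows "b powr m - a powr m \<le> m * (b - a)"
proof (cases "a = 0")
  case True
  have "b powr m \<le> b" using assms by (cases "b = 0") (auto intro: powr_le_one_le)
  also have "\<dots> \<le> m * b" using assms by (simp add: mult_le_cancel_right1)
  finally show ?thesis using True assms by simp
next
  case False
  show ?thesis
  proof (cases "a = b")
    case False
    with assms have "a < b" by simp
    have "((\<lambda>t. t powr m) has_real_derivative m * t powr (m - 1)) (at t)" if "a \<le> t" for t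
      using that \<open>a \<noteq> 0\<close> assms by (intro has_real_derivative_powr) auto
    with \<open>a < b\<close> obtain z where z: "a < z" "z < b"
      and mvt: "b powr m - a powr m = (b - a) * (m * z powr (m - 1))"
      using MVT2[of a b "\<lambda>t. t powr m" "\<lambda>t. m * t powr (m - 1)"] by blast
    have "z powr (m - 1) \<le> 1" using z assms by (intro powr_le1) auto
    hence "m * z powr (m - 1) \<le> m" using assms by (simp add: mult_le_cancel_left1)
    thus ?thesis using mvt \<open>a < b\<close> by (simp add: mult_left_mono mult.commute)
  qed simp
qed

lemma powr_diff_le_tangent:
  fixes A B s :: real
  assumes "0 \<le> B" "B \<le> A" "s \<le> 1"
  shows "A powr s - B powr s \<le> (A - B) * A powr (s - 1)"
proof (cases "B = 0")
  case True
  then show ?thesis using assms by (cases "A = 0") (simp_all add: powr_mult_base)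
next
  case False
  hence "A powr (s - 1) \<le> B powr (s - 1)" using assms by (intro powr_mono2') auto
  hence "B * A powr (s - 1) \<le> B * B powr (s - 1)" using assms by (intro mult_left_mono) auto
  also have "\<dots> = B powr s" using assms False by (simp add: powr_mult_base)
  finally have "B * A powr (s - 1) \<le> B powr s" .
  moreover have "A * A powr (s - 1) = A powr s" using assms False by (simp add: powr_mult_base)
  ultimately show ?thesis by (simp add: algebra_simps)
qed

lemma powr_diff_le_powr_diff:
  fixes A B s :: real
  assumes "0 \<le> B" "B \<le> A" "s \<le> 1"
  shows "A powr s - B powr s \<le> (A - B) powr s"
proof (cases "A = B")
  case False
  hence "A powr (s - 1) \<le> (A - B) powr (s - 1)" using assms by (intro powr_mono2') auto
  hence "(A - B) * A powr (s - 1) \<le> (A - B) * (A - B) powr (s - 1)"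
    using assms by (intro mult_left_mono) auto
  also have "\<dots> = (A - B) powr s" using assms False by (simp add: powr_mult_base)
  finally have "(A - B) * A powr (s - 1) \<le> (A - B) powr s" .
  thus ?thesis using powr_diff_le_tangent[OF assms] by linarith
qed simp

lemma u_sp_eq_truncated:
  assumes "1 < p"
  shows "u_sp s p x = (1 - min \<bar>x\<bar> 1 powr (p / (p - 1))) powr s"
proof -
  have "pos_part (1 - \<bar>x\<bar> powr (p / (p - 1))) = 1 - min \<bar>x\<bar> 1 powr (p / (p - 1))"
  proof (cases "\<bar>x\<bar> \<le> 1")
    case True
    hence "\<bar>x\<bar> powr (p / (p - 1)) \<le> 1" using assms by (intro powr_le1) auto
    then show ?thesis using True by (simp add: pos_part_def)
  next
    case False
    hence "1 \<le> \<bar>x\<bar> powr (p / (p - 1))" using assms by (intro ge_one_powr_ge_zero) auto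
    then show ?thesis using False by (simp add: pos_part_def)
  qed
  thus ?thesis by (simp add: u_sp_def)
qed

lemma u_sp_eq_0: "1 < p \<Longrightarrow> 1 \<le> \<bar>x\<bar> \<Longrightarrow> u_sp s p x = 0"
  by (simp add: u_sp_eq_truncated)

lemma u_sp_nonneg: "0 \<le> u_sp s p x"
  by (simp add: u_sp_def)

lemma u_sp_le_1:
  assumes "1 < p" "0 \<le> s"
  shows "u_sp s p x \<le> 1"
proof -
  have "min \<bar>x\<bar> 1 powr (p / (p - 1)) \<le> 1" using assms by (intro powr_le1) auto
  thus ?thesis using assms by (simp add: u_sp_eq_truncated powr_le1)
qed

lemma u_sp_measurable [measurable]: "u_sp s p \<in> borel_measurable borel"
  unfolding u_sp_def pos_part_def by measurable

lemma u_sp_diff_bounds: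
  fixes s p x y :: real
  defines "m \<equiv> p / (p - 1)"
  assumes s: "0 \<le> s" "s \<le> 1" and p: "1 < p" and x: "\<bar>x\<bar> < 1" and xy: "\<bar>x\<bar> \<le> \<bar>y\<bar>"
  shows "\<bar>u_sp s p x - u_sp s p y\<bar> \<le> m * \<bar>x - y\<bar> * (1 - \<bar>x\<bar>) powr (s - 1)"
    and "\<bar>u_sp s p x - u_sp s p y\<bar> \<le> (m * \<bar>x - y\<bar>) powr s"
    and "\<bar>u_sp s p x - u_sp s p y\<bar> \<le> 1"
proof -
  define a b where "a = \<bar>x\<bar>" and "b = min \<bar>y\<bar> 1"
  define VX VY where "VX = 1 - a powr m" and "VY = 1 - b powr m"
  have m: "1 \<le> m" using p by (simp add: m_def field_simps)
  have ab: "0 \<le> a" "a \<le> b" "b \<le> 1" "a < 1" using x xy by (auto simp: a_def b_def)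
  have ux: "u_sp s p x = VX powr s" and uy: "u_sp s p y = VY powr s"
    using p x by (simp_all add: u_sp_eq_truncated VX_def VY_def a_def b_def m_def)
  have "a powr m \<le> a" using ab m by (cases "a = 0") (auto intro: powr_le_one_le)
  hence VX_ge: "1 - \<bar>x\<bar> \<le> VX" by (simp add: VX_def a_def)
  have "a powr m \<le> b powr m" using ab m by (intro powr_mono2) auto
  hence VYX: "VY \<le> VX" by (simp add: VX_def VY_def)
  have "b powr m \<le> 1" using ab m by (intro powr_le1) auto
  hence VY0: "0 \<le> VY" by (simp add: VY_def)
  have "b - a \<le> \<bar>x - y\<bar>" using ab xy by (simp add: a_def b_def)
  hence "m * (b - a) \<le> m * \<bar>x - y\<bar>" using m by (intro mult_left_mono) auto
  hence VXY: "VX - VY \<le> m * \<bar>x - y\<bar>"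
    using powr_diff_le_mult_diff[OF ab(1-3) m] by (simp add: VX_def VY_def)
  have diff: "\<bar>u_sp s p x - u_sp s p y\<bar> = VX powr s - VY powr s"
    using VYX VY0 s by (simp add: ux uy powr_mono2)
  have "VX powr s - VY powr s \<le> (VX - VY) * VX powr (s - 1)"
    using powr_diff_le_tangent[OF VY0 VYX s(2)] .
  also have "\<dots> \<le> m * \<bar>x - y\<bar> * (1 - \<bar>x\<bar>) powr (s - 1)"
    using VXY VYX VX_ge x s by (intro mult_mono powr_mono2') auto
  finally show "\<bar>u_sp s p x - u_sp s p y\<bar> \<le> m * \<bar>x - y\<bar> * (1 - \<bar>x\<bar>) powr (s - 1)"
    by (simp add: diff)
  have "VX powr s - VY powr s \<le> (VX - VY) powr s"
    using powr_diff_le_powr_diff[OF VY0 VYX s(2)] .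
  also have "\<dots> \<le> (m * \<bar>x - y\<bar>) powr s" using VXY VYX s by (intro powr_mono2) auto
  finally show "\<bar>u_sp s p x - u_sp s p y\<bar> \<le> (m * \<bar>x - y\<bar>) powr s"
    by (simp add: diff)
  show "\<bar>u_sp s p x - u_sp s p y\<bar> \<le> 1"
    using u_sp_nonneg[of s p x] u_sp_nonneg[of s p y] u_sp_le_1[OF p s(1), of x] u_sp_le_1[OF p s(1), of y]
    by (simp add: abs_le_iff)
qed

definition dominating_kernel :: "real \<Rightarrow> real \<Rightarrow> real \<Rightarrow> real \<Rightarrow> real \<Rightarrow> real" where
  "dominating_kernel K e q c t =
     K * c powr (- e) * (indicator {0..1} t * t powr (e - 1)) + indicator {1..} t * t powr (- 1 - q)"

lemma dominating_kernel_nonneg: "0 \<le> K \<Longrightarrow> 0 \<le> dominating_kernel K e q c t"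
  unfolding dominating_kernel_def by (auto simp: indicator_def)

lemma dominating_kernel_measurable [measurable]: "dominating_kernel K e q c \<in> borel_measurable borel"
  unfolding dominating_kernel_def by measurable

lemma dominating_kernel_ge_near:
  assumes "0 < t" "t \<le> 1" "0 < c"
  shows "K * (t / c) powr e / t \<le> dominating_kernel K e q c t"
proof -
  have "K * (t / c) powr e / t = K * c powr (- e) * (indicator {0..1} t * t powr (e - 1))"
    using assms by (simp add: indicator_def powr_minus powr_divide powr_diff divide_simps)
  also have "\<dots> \<le> dominating_kernel K e q c t"
    unfolding dominating_kernel_def by (simp add: indicator_def)
  finally show ?thesis .
qed

lemma gagliardo_quotient_le_dominating_kernel:
  fixes d t c m p s e :: real
  assumes d: "0 \<le> d" and t: "0 \<le> t" and c: "0 < c" and m: "1 \<le> m" and p: "1 < p"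
    and s: "0 \<le> s" "s \<le> 1" and e: "0 \<le> e" "e \<le> p * (1 - s)"
    and d_lipschitz: "d \<le> m * t * c powr (s - 1)" and d_hoelder: "d \<le> (m * t) powr s" and d_1: "d \<le> 1"
  shows "d powr p / t powr (1 + s * p) \<le> dominating_kernel (m powr p) e (s * p) c t"
proof -
  consider "t = 0" | "1 < t" | "0 < t" "t \<le> 1" "t \<le> c" | "t \<le> 1" "c < t"
    using t by linarith
  then show ?thesis
  proof cases
    case 1
    then show ?thesis by (simp add: dominating_kernel_nonneg)
  next
    case 2
    have "d powr p / t powr (1 + s * p) \<le> 1 powr p / t powr (1 + s * p)"
      using d d_1 p by (intro divide_right_mono powr_mono2) auto
    also have "\<dots> = t powr (- 1 - s * p)" using 2 by (simp add: powr_minus_divide[symmetric] powr_minus)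
    also have "\<dots> \<le> dominating_kernel (m powr p) e (s * p) c t"
      unfolding dominating_kernel_def using 2 by (simp add: indicator_def)
    finally show ?thesis .
  next
    case 3
    have "d powr p / t powr (1 + s * p) \<le> (m * t * c powr (s - 1)) powr p / t powr (1 + s * p)"
      using d d_lipschitz p by (intro divide_right_mono powr_mono2) auto
    also have "\<dots> = m powr p * (t / c) powr (p * (1 - s)) / t"
      using 3 c m by (simp add: powr_mult powr_powr powr_divide powr_add powr_diff algebra_simps)
    also have "\<dots> \<le> m powr p * (t / c) powr e / t"
      using 3 c e by (intro divide_right_mono mult_left_mono powr_mono') auto
    also have "\<dots> \<le> dominating_kernel (m powr p) e (s * p) c t"
      using 3 c by (intro dominating_kernel_ge_near) auto
    finally show ?thesis .
  next
    case 4
    have "d powr p / t powr (1 + s * p) \<le> ((m * t) powr s) powr p / t powr (1 + s * p)"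
      using d d_hoelder p by (intro divide_right_mono powr_mono2) auto
    also have "\<dots> = m powr (s * p) / t"
      using 4 c m by (simp add: powr_mult powr_powr powr_add algebra_simps)
    also have "\<dots> \<le> m powr p * (t / c) powr e / t"
    proof -
      have "m powr (s * p) \<le> m powr p" using m p s by (intro powr_mono) auto
      also have "\<dots> \<le> m powr p * (t / c) powr e"
        using ge_one_powr_ge_zero[of "t / c" e] 4 c e by (simp add: mult_le_cancel_left1)
      finally show ?thesis using 4 c by (intro divide_right_mono) auto
    qed
    also have "\<dots> \<le> dominating_kernel (m powr p) e (s * p) c t"
      using 4 c by (intro dominating_kernel_ge_near) auto
    finally show ?thesis .
  qed
qed

definition u_sp_majorant :: "real \<Rightarrow> real \<Rightarrow> real \<Rightarrow> real \<Rightarrow> real \<Rightarrow> real" where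
  "u_sp_majorant s p e x y =
     indicator {-1<..<1} x * dominating_kernel ((p / (p - 1)) powr p) e (s * p) (1 - \<bar>x\<bar>) \<bar>x - y\<bar>"

lemma u_sp_majorant_nonneg: "0 \<le> u_sp_majorant s p e x y"
  unfolding u_sp_majorant_def by (intro mult_nonneg_nonneg dominating_kernel_nonneg) auto

lemma u_sp_majorant_measurable [measurable]:
  "(\<lambda>(x, y). u_sp_majorant s p e x y) \<in> borel_measurable (lborel \<Otimes>\<^sub>M lborel)"
proof -
  have "(\<lambda>(x, y). dominating_kernel K e q (f x) (g x y)) \<in> borel_measurable (lborel \<Otimes>\<^sub>M lborel)"
    if [measurable]: "f \<in> borel_measurable borel" "(\<lambda>(x, y). g x y) \<in> borel_measurable (lborel \<Otimes>\<^sub>M lborel)"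
    for K e q f and g :: "real \<Rightarrow> real \<Rightarrow> real"
    unfolding dominating_kernel_def by measurable
  then show ?thesis unfolding u_sp_majorant_def by measurable
qed

lemma u_sp_gagliardo_quotient_le_majorant_ordered:
  assumes s: "0 \<le> s" "s \<le> 1" and p: "1 < p" and e: "0 \<le> e" "e \<le> p * (1 - s)"
    and xy: "\<bar>x\<bar> \<le> \<bar>y\<bar>"
  shows "\<bar>u_sp s p x - u_sp s p y\<bar> powr p / \<bar>x - y\<bar> powr (1 + s * p) \<le> u_sp_majorant s p e x y"
proof (cases "\<bar>x\<bar> < 1")
  case True
  have "1 \<le> p / (p - 1)" using p by (simp add: field_simps)
  with True show ?thesis
    using gagliardo_quotient_le_dominating_kernel[OF _ _ _ _ p s e u_sp_diff_bounds[OF s p True xy]]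
    by (simp add: u_sp_majorant_def abs_less_iff)
next
  case False
  then show ?thesis using xy p by (simp add: u_sp_eq_0 u_sp_majorant_nonneg)
qed

lemma u_sp_gagliardo_quotient_le_majorant:
  assumes "0 \<le> s" "s \<le> 1" "1 < p" "0 \<le> e" "e \<le> p * (1 - s)"
  shows "\<bar>u_sp s p x - u_sp s p y\<bar> powr p / \<bar>x - y\<bar> powr (1 + s * p)
           \<le> u_sp_majorant s p e x y + u_sp_majorant s p e y x"
proof (cases "\<bar>x\<bar> \<le> \<bar>y\<bar>")
  case True
  then show ?thesis
    using u_sp_gagliardo_quotient_le_majorant_ordered[OF assms] u_sp_majorant_nonneg[of s p e y x]
    by fastforce
next
  case False
  then show ?thesis
    using u_sp_gagliardo_quotient_le_majorant_ordered[OF assms, of y x] u_sp_majorant_nonneg[of s p e x y]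
    by (simp add: abs_minus_commute)
qed

lemma nn_integral_abs_le:
  fixes g :: "real \<Rightarrow> ennreal"
  assumes [measurable]: "g \<in> borel_measurable borel"
  shows "(\<integral>\<^sup>+t. g \<bar>t\<bar> \<partial>lborel) \<le> 2 * (\<integral>\<^sup>+t. g t \<partial>lborel)"
proof -
  have "(\<integral>\<^sup>+t. g \<bar>t\<bar> \<partial>lborel) \<le> (\<integral>\<^sup>+t. g t + g (- t) \<partial>lborel)"
    by (intro nn_integral_mono) (auto simp: abs_if)
  also have "\<dots> = (\<integral>\<^sup>+t. g t \<partial>lborel) + (\<integral>\<^sup>+t. g (- t) \<partial>lborel)"
    by (intro nn_integral_add) auto
  also have "(\<integral>\<^sup>+t. g (- t) \<partial>lborel) = (\<integral>\<^sup>+t. g t \<partial>lborel)"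
    using nn_integral_real_affine[of g "-1" 0] by simp
  finally show ?thesis by (simp add: mult_2)
qed

lemma nn_integral_dominating_kernel:
  fixes K e q c :: real
  assumes K: "0 \<le> K" and c: "0 < c" and e: "0 < e" and q: "0 < q"
  shows "(\<integral>\<^sup>+t. ennreal (dominating_kernel K e q c t) \<partial>lborel) = ennreal (K * c powr (- e) / e + 1 / q)"
proof -
  have near: "(\<integral>\<^sup>+t. ennreal (indicator {0..1} t * t powr (e - 1)) \<partial>lborel) = ennreal (1 / e)"
    using nn_integral_has_integral_lebesgue[OF _ has_integral_powr_from_0[of "e - 1" 1]] e by simp
  have far: "(\<integral>\<^sup>+t. ennreal (indicator {1..} t * t powr (- 1 - q)) \<partial>lborel) = ennreal (1 / q)"
    using nn_integral_has_integral_lebesgue[OF _ has_integral_powr_to_inf[of "- 1 - q" 1]] q by simp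
  have "(\<integral>\<^sup>+t. ennreal (dominating_kernel K e q c t) \<partial>lborel) =
      (\<integral>\<^sup>+t. ennreal (K * c powr (- e)) * ennreal (indicator {0..1} t * t powr (e - 1))
             + ennreal (indicator {1..} t * t powr (- 1 - q)) \<partial>lborel)"
    unfolding dominating_kernel_def using K
    by (intro nn_integral_cong) (simp add: ennreal_plus[symmetric] ennreal_mult[symmetric] del: ennreal_plus)
  also have "\<dots> = ennreal (K * c powr (- e)) * ennreal (1 / e) + ennreal (1 / q)"
    by (subst nn_integral_add) (auto simp: nn_integral_cmult near far)
  also have "\<dots> = ennreal (K * c powr (- e) / e + 1 / q)"
    using K e q by (simp add: ennreal_plus[symmetric] ennreal_mult[symmetric] del: ennreal_plus)
  finally show ?thesis .
qed

lemma nn_integral_one_minus_abs_powr_finite: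
  fixes e :: real
  assumes "e < 1"
  shows "(\<integral>\<^sup>+x. ennreal (indicator {-1<..<1} x * (1 - \<bar>x\<bar>) powr (- e)) \<partial>lborel) < \<infinity>"
proof -
  define g where "g r = ennreal (indicator {0..<1} r * (1 - r) powr (- e))" for r :: real
  have [measurable]: "g \<in> borel_measurable borel" unfolding g_def by measurable
  have "(\<integral>\<^sup>+r. g r \<partial>lborel) = (\<integral>\<^sup>+r. ennreal (indicator {0..<1} (1 - r) * r powr (- e)) \<partial>lborel)"
    using nn_integral_real_affine[of g "-1" 1] by (simp add: g_def)
  also have "\<dots> \<le> (\<integral>\<^sup>+r. ennreal (indicator {0..1} r * r powr (- e)) \<partial>lborel)"
    by (intro nn_integral_mono) (auto simp: indicator_def)
  also have "\<dots> = ennreal (1 / (1 - e))"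
    using nn_integral_has_integral_lebesgue[OF _ has_integral_powr_from_0[of "- e" 1]] assms by simp
  finally have "(\<integral>\<^sup>+r. g r \<partial>lborel) \<le> ennreal (1 / (1 - e))" .
  then have g_finite: "(\<integral>\<^sup>+r. g r \<partial>lborel) < \<infinity>"
    using ennreal_less_top[of "1 / (1 - e)"] by (simp add: order.strict_trans1)
  have "(\<integral>\<^sup>+x. ennreal (indicator {-1<..<1} x * (1 - \<bar>x\<bar>) powr (- e)) \<partial>lborel)
      = (\<integral>\<^sup>+x. g \<bar>x\<bar> \<partial>lborel)"
    by (intro nn_integral_cong) (auto simp: g_def indicator_def abs_less_iff)
  also have "\<dots> \<le> 2 * (\<integral>\<^sup>+r. g r \<partial>lborel)"
    by (rule nn_integral_abs_le) measurable
  also have "\<dots> < \<infinity>" using g_finite by (simp add: ennreal_mult_less_top)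
  finally show ?thesis .
qed

lemma nn_integral_u_sp_majorant_le:
  assumes s: "0 < s" and p: "1 < p" and e: "0 < e"
  shows "(\<integral>\<^sup>+y. ennreal (u_sp_majorant s p e x y) \<partial>lborel)
           \<le> ennreal (2 * indicator {-1<..<1} x *
                 ((p / (p - 1)) powr p * (1 - \<bar>x\<bar>) powr (- e) / e + 1 / (s * p)))"
proof (cases "\<bar>x\<bar> < 1")
  case True
  define k where "k t = ennreal (dominating_kernel ((p / (p - 1)) powr p) e (s * p) (1 - \<bar>x\<bar>) t)" for t
  have [measurable]: "k \<in> borel_measurable borel" unfolding k_def by measurable
  have "(\<integral>\<^sup>+y. ennreal (u_sp_majorant s p e x y) \<partial>lborel) = (\<integral>\<^sup>+y. k \<bar>x - y\<bar> \<partial>lborel)"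
    using True by (simp add: u_sp_majorant_def k_def abs_less_iff)
  also have "\<dots> = (\<integral>\<^sup>+t. k \<bar>t\<bar> \<partial>lborel)"
    using nn_integral_real_affine[of "\<lambda>t. k \<bar>t\<bar>" "-1" x] by simp
  also have "\<dots> \<le> 2 * (\<integral>\<^sup>+t. k t \<partial>lborel)"
    by (rule nn_integral_abs_le) measurable
  also have "(\<integral>\<^sup>+t. k t \<partial>lborel) = ennreal ((p / (p - 1)) powr p * (1 - \<bar>x\<bar>) powr (- e) / e + 1 / (s * p))"
    unfolding k_def using True s p e by (intro nn_integral_dominating_kernel) auto
  also have "2 * ennreal ((p / (p - 1)) powr p * (1 - \<bar>x\<bar>) powr (- e) / e + 1 / (s * p))
      = ennreal (2 * indicator {-1<..<1} x * ((p / (p - 1)) powr p * (1 - \<bar>x\<bar>) powr (- e) / e + 1 / (s * p)))"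
    using True s p e by (subst ennreal_mult) (auto simp: abs_less_iff simp del: ennreal_plus)
  finally show ?thesis .
next
  case False
  then have "x \<notin> {-1<..<1}" by auto
  then show ?thesis by (simp add: u_sp_majorant_def)
qed

lemma u_sp_majorant_integral_finite:
  assumes s: "0 < s" and p: "1 < p" and e: "0 < e" "e < 1"
  shows "(\<integral>\<^sup>+x. (\<integral>\<^sup>+y. ennreal (u_sp_majorant s p e x y) \<partial>lborel) \<partial>lborel) < \<infinity>"
proof -
  define K where "K = (p / (p - 1)) powr p"
  have "(\<integral>\<^sup>+x. (\<integral>\<^sup>+y. ennreal (u_sp_majorant s p e x y) \<partial>lborel) \<partial>lborel)
      \<le> (\<integral>\<^sup>+x. ennreal (2 * indicator {-1<..<1} x * (K * (1 - \<bar>x\<bar>) powr (- e) / e + 1 / (s * p))) \<partial>lborel)"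
    unfolding K_def using nn_integral_u_sp_majorant_le[OF s p e(1)] by (intro nn_integral_mono) auto
  also have "\<dots> = (\<integral>\<^sup>+x. ennreal (2 * K / e) * ennreal (indicator {-1<..<1} x * (1 - \<bar>x\<bar>) powr (- e))
                        + ennreal (2 / (s * p)) * indicator {-1<..<1} x \<partial>lborel)"
    using s p e unfolding K_def
    by (intro nn_integral_cong)
      (simp add: indicator_def ennreal_plus[symmetric] ennreal_mult[symmetric] field_simps del: ennreal_plus)
  also have "\<dots> = ennreal (2 * K / e) * (\<integral>\<^sup>+x. ennreal (indicator {-1<..<1} x * (1 - \<bar>x\<bar>) powr (- e)) \<partial>lborel)
                  + ennreal (2 / (s * p)) * emeasure lborel {-1<..<1::real}"
    by (subst nn_integral_add) (auto simp: nn_integral_cmult)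
  also have "\<dots> < \<infinity>"
    using nn_integral_one_minus_abs_powr_finite[OF e(2)] by (simp add: ennreal_mult_less_top)
  finally show ?thesis .
qed

lemma nn_integral_symmetrization_finite:
  fixes H :: "'a \<Rightarrow> 'a \<Rightarrow> ennreal"
  assumes "sigma_finite_measure M"
    and [measurable]: "(\<lambda>(x, y). H x y) \<in> borel_measurable (M \<Otimes>\<^sub>M M)"
    and finite: "(\<integral>\<^sup>+x. (\<integral>\<^sup>+y. H x y \<partial>M) \<partial>M) < \<infinity>"
  shows "(\<integral>\<^sup>+x. (\<integral>\<^sup>+y. H x y + H y x \<partial>M) \<partial>M) < \<infinity>"
proof -
  interpret pair_sigma_finite M M
    using assms(1) by (simp add: pair_sigma_finite_def)
  have "(\<integral>\<^sup>+x. (\<integral>\<^sup>+y. H x y + H y x \<partial>M) \<partial>M)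
      = (\<integral>\<^sup>+x. (\<integral>\<^sup>+y. H x y \<partial>M) \<partial>M) + (\<integral>\<^sup>+x. (\<integral>\<^sup>+y. H y x \<partial>M) \<partial>M)"
    by (subst nn_integral_add[symmetric]) (auto intro!: nn_integral_cong nn_integral_add)
  also have "(\<integral>\<^sup>+x. (\<integral>\<^sup>+y. H y x \<partial>M) \<partial>M) = (\<integral>\<^sup>+x. (\<integral>\<^sup>+y. H x y \<partial>M) \<partial>M)"
    by (rule Fubini'[symmetric]) measurable
  finally show ?thesis using finite by simp
qed

lemma u_sp_gagliardo_finite:
  assumes s: "0 < s" "s < 1" and p: "1 < p"
  shows "(\<integral>\<^sup>+x. (\<integral>\<^sup>+y. ennreal (\<bar>u_sp s p x - u_sp s p y\<bar> powr p / \<bar>x - y\<bar> powr (1 + s * p))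
           \<partial>lborel) \<partial>lborel) < \<infinity>"
proof -
  define e where "e = min (1 / 2) (p * (1 - s))"
  have e: "0 < e" "e < 1" "e \<le> p * (1 - s)" using s p by (auto simp: e_def)
  have "(\<integral>\<^sup>+x. (\<integral>\<^sup>+y. ennreal (\<bar>u_sp s p x - u_sp s p y\<bar> powr p / \<bar>x - y\<bar> powr (1 + s * p))
           \<partial>lborel) \<partial>lborel)
      \<le> (\<integral>\<^sup>+x. (\<integral>\<^sup>+y. ennreal (u_sp_majorant s p e x y) + ennreal (u_sp_majorant s p e y x)
           \<partial>lborel) \<partial>lborel)"
    using u_sp_gagliardo_quotient_le_majorant[of s p e] s p e u_sp_majorant_nonneg
    by (intro nn_integral_mono) (simp add: ennreal_plus[symmetric] del: ennreal_plus)
  also have "\<dots> < \<infinity>"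
    using u_sp_majorant_integral_finite[OF s(1) p e(1,2)]
    by (intro nn_integral_symmetrization_finite) (auto intro: lborel.sigma_finite_measure_axioms)
  finally show ?thesis .
qed

lemma u_sp_powr_integrable:
  assumes "0 \<le> s" "1 < p"
  shows "integrable lborel (\<lambda>x. \<bar>u_sp s p x\<bar> powr p)"
proof (rule Bochner_Integration.integrable_bound)
  show "integrable lborel (indicator {-1..1} :: real \<Rightarrow> real)" by simp
  show "AE x in lborel. norm (\<bar>u_sp s p x\<bar> powr p) \<le> norm (indicator {-1..1} x :: real)"
  proof (intro AE_I2)
    fix x :: real
    show "norm (\<bar>u_sp s p x\<bar> powr p) \<le> norm (indicator {-1..1} x :: real)"
    proof (cases "\<bar>x\<bar> \<le> 1")
      case True
      have "\<bar>u_sp s p x\<bar> powr p \<le> 1"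
        using u_sp_nonneg[of s p x] u_sp_le_1[OF assms(2,1), of x] assms by (intro powr_le1) auto
      thus ?thesis using True by (simp add: indicator_def abs_le_iff)
    next
      case False
      thus ?thesis using assms(2) by (simp add: u_sp_eq_0 indicator_def)
    qed
  qed
qed measurable

theorem proposition4p1:
  fixes s p :: real
  assumes "0 < s" "s < 1" "1 < p"
  shows "in_Wsp s p (u_sp s p)"
  using assms u_sp_measurable u_sp_powr_integrable u_sp_gagliardo_finite by (simp add: in_Wsp_def)

end
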